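(* For every integer $k\ge 2$, the renormalization constant $r_k$ of $SG_k$ satisfies $r_k>\dfrac{2}{3k}$.
   Context: Let $q_0,q_1,q_2$ be the vertices of an equilateral triangle $T$ in $\mathbb R^2$ with side length $1$. Fix $k\ge2$ and let $d=k(k+1)/2$. $SG_k$ is the self-similar set $K=\bigcup_{i=0}^{d-1}F_i(K)$. Here $F_i(x)=x/k+b_i$ are the similitudes mapping $T$ onto the $d$ triangles of side $1/k$ having the same orientation as $T$ in the subdivision of $T$ into $k^2$ such triangles. Set $V_0=\{q_0,q_1,q_2\}$ and $V_1=\bigcup_i F_i(V_0)$. The graph $\Gamma_1$ has vertex set $V_1$, with $x\sim_1 y$ iff $x\neq y$ and both lie in some $F_i(V_0)$. The complete graph on $V_0$ is $\Gamma_0$. With $\mathcal E_m(u)=r^{-m}\sum_{x\sim_m y}(u(x)-u(y))^2$, the renormalization constant $r_k>0$ is the unique $r$ such that for all $u:V_0\to\mathbb R$, $\min\{\mathcal E_1(\tilde u):\tilde u|_{V_0}=u\}=\mathcal E_0(u)$. *)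

theory Defs
  imports Complex_Main
begin

text \<open>The plane is modelled as the complex numbers. The equilateral triangle T with
side length 1 has vertices q0 = 0, q1 = 1, q2 = e^(i pi/3).\<close>

definition q0 :: complex where "q0 = 0"
definition q1 :: complex where "q1 = 1"
definition q2 :: complex where "q2 = Complex (1/2) (sqrt 3 / 2)"

definition V0 :: "complex set" where "V0 = {q0, q1, q2}"

text \<open>Index set of the d = k(k+1)/2 upward subtriangles of side 1/k:
the subtriangle with index (a,b) has vertices (a + b q2 + {q0,q1,q2})/k, a + b <= k-1.\<close>

definition cells :: "nat \<Rightarrow> (nat \<times> nat) set" where
  "cells k = {(a, b). a + b < k}"

definition Fmap :: "nat \<Rightarrow> nat \<times> nat \<Rightarrow> complex \<Rightarrow> complex" where
  "Fmap k i x = x / of_nat k + (of_nat (fst i) * q1 + of_nat (snd i) * q2) / of_nat k"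

definition V1 :: "nat \<Rightarrow> complex set" where
  "V1 k = (\<Union>i\<in>cells k. Fmap k i ` V0)"

text \<open>Adjacency relations of Gamma_0 (complete graph on V0) and Gamma_1, as sets of ordered pairs.\<close>

definition edges0 :: "(complex \<times> complex) set" where
  "edges0 = {(x, y). x \<in> V0 \<and> y \<in> V0 \<and> x \<noteq> y}"

definition edges1 :: "nat \<Rightarrow> (complex \<times> complex) set" where
  "edges1 k = {(x, y). x \<in> V1 k \<and> y \<in> V1 k \<and> x \<noteq> y \<and>
                 (\<exists>i\<in>cells k. x \<in> Fmap k i ` V0 \<and> y \<in> Fmap k i ` V0)}"

definition energy0 :: "(complex \<Rightarrow> real) \<Rightarrow> real" where
  "energy0 u = (\<Sum>(x, y)\<in>edges0. (u x - u y)^2)"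

definition energy1 :: "nat \<Rightarrow> real \<Rightarrow> (complex \<Rightarrow> real) \<Rightarrow> real" where
  "energy1 k r u = (1 / r) * (\<Sum>(x, y)\<in>edges1 k. (u x - u y)^2)"

definition min_ext_energy :: "nat \<Rightarrow> real \<Rightarrow> (complex \<Rightarrow> real) \<Rightarrow> real" where
  "min_ext_energy k r u = Inf {energy1 k r v | v. \<forall>x\<in>V0. v x = u x}"

definition renorm_const :: "nat \<Rightarrow> real" where
  "renorm_const k = (THE r. r > 0 \<and> (\<forall>u. min_ext_energy k r u = energy0 u))"

end

theory Submission
  imports Defs "HOL-Analysis.Convex" "HOL-Library.Indicator_Function"
begin

text \<open>Let \<open>M u\<close> be the minimal unnormalised level-one energy of extensions of \<open>u\<close> from
\<open>V0\<close> to \<open>V1\<close>. The parallelogram law and 2-homogeneity of the Dirichlet sum survive the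
infimum, and a nonnegative functional with these two properties is a quadratic form: its
polarisation is additive and locally bounded, hence bilinear. Since \<open>M\<close> ignores constants
and is invariant under the rotation of the triangle by \<open>2\<pi>/3\<close>, it follows that
\<open>M = c \<cdot> energy0\<close> with \<open>c = M (indicator {q0}) / 4\<close>, and \<open>r\<^sub>k = c\<close>. An extension of the
indicator of \<open>q0\<close> falls from 1 to 0 along the \<open>k\<close> edges of each of the two sides of
the triangle through \<open>q0\<close>; by Cauchy-Schwarz each side, counted in both orientations,
contributes at least \<open>2/k\<close>. Hence \<open>c \<ge> 1/k > 2/(3k)\<close>.\<close>

section \<open>Quadratic functionals\<close>

lemma additive_bounded_imp_linear:
  fixes h :: "real \<Rightarrow> real"
  assumes add: "\<And>s t. h (s + t) = h s + h t"
    and bounded: "\<And>t. \<bar>t\<bar> \<le> 1 \<Longrightarrow> \<bar>h t\<bar> \<le> K"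
  shows "h t = t * h 1"
proof -
  define d where "d x = h x - x * h 1" for x
  have d_add: "d (s + t) = d s + d t" for s t
    by (simp add: d_def add algebra_simps)
  have d_uminus: "d (- s) = - d s" for s
    using d_add[of 0 0] d_add[of s "- s"] by simp
  have d_of_nat_mult: "d (of_nat n * s) = of_nat n * d s" for n s
    using d_add[of 0 0] by (induction n) (simp_all add: d_add distrib_right)
  have d_of_int: "d (of_int m) = 0" for m
    using d_of_nat_mult[of _ 1] d_uminus
    by (cases m rule: int_cases2) (simp_all add: d_def)
  have d_bounded: "\<bar>d s\<bar> \<le> K + \<bar>h 1\<bar>" if "\<bar>s\<bar> \<le> 1" for s
    using bounded[OF that] that abs_triangle_ineq4[of "h s" "s * h 1"]
      mult_left_le_one_le[of "\<bar>h 1\<bar>" "\<bar>s\<bar>"]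
    unfolding d_def by (simp add: abs_mult)
  have multiples_bounded: "of_nat n * \<bar>d t\<bar> \<le> K + \<bar>h 1\<bar>" for n
  proof -
    define m where "m = \<lfloor>of_nat n * t\<rfloor>"
    have "d (of_nat n * t - of_int m) = of_nat n * d t"
      using d_add[of "of_nat n * t" "- of_int m"] d_uminus[of "of_int m"] d_of_int[of m]
        d_of_nat_mult[of n t] by simp
    moreover have "\<bar>of_nat n * t - of_int m\<bar> \<le> 1"
      unfolding m_def by linarith
    ultimately show ?thesis
      using d_bounded by (fastforce simp: abs_mult)
  qed
  have "d t = 0"
  proof (rule ccontr)
    assume "d t \<noteq> 0"
    then obtain n :: nat where "(K + \<bar>h 1\<bar>) / \<bar>d t\<bar> < of_nat n"
      using reals_Archimedean2 by blast
    with \<open>d t \<noteq> 0\<close> multiples_bounded[of n] show False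
      by (simp add: field_simps)
  qed
  then show ?thesis
    by (simp add: d_def)
qed

locale quadratic_functional =
  fixes N :: "('a \<Rightarrow> real) \<Rightarrow> real"
  assumes parallelogram: "N (\<lambda>x. u x + w x) + N (\<lambda>x. u x - w x) = 2 * N u + 2 * N w"
    and scale: "N (\<lambda>x. t * u x) = t\<^sup>2 * N u"
    and nonneg: "0 \<le> N u"
begin

definition polar :: "('a \<Rightarrow> real) \<Rightarrow> ('a \<Rightarrow> real) \<Rightarrow> real" where
  "polar u w = (N (\<lambda>x. u x + w x) - N (\<lambda>x. u x - w x)) / 4"

lemma uminus: "N (\<lambda>x. - u x) = N u"
  using scale[of "-1" u] by simp

lemma polar_commute: "polar u w = polar w u"
  using uminus[of "\<lambda>x. w x - u x"] by (simp add: polar_def add.commute)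

lemma polar_add_diff: "polar (\<lambda>x. u x + u' x) w + polar (\<lambda>x. u x - u' x) w = 2 * polar u w"
proof -
  have "N (\<lambda>x. u x + u' x + w x) + N (\<lambda>x. u x - u' x + w x) = 2 * N (\<lambda>x. u x + w x) + 2 * N u'"
    using parallelogram[of "\<lambda>x. u x + w x" u'] by (simp add: algebra_simps)
  moreover have "N (\<lambda>x. u x + u' x - w x) + N (\<lambda>x. u x - u' x - w x) = 2 * N (\<lambda>x. u x - w x) + 2 * N u'"
    using parallelogram[of "\<lambda>x. u x - w x" u'] by (simp add: algebra_simps)
  ultimately show ?thesis
    unfolding polar_def by argo
qed

lemma polar_add: "polar (\<lambda>x. u x + u' x) w = polar u w + polar u' w"
proof -
  have polar_zero: "polar (\<lambda>x. 0) w = 0"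
    using uminus[of w] by (simp add: polar_def)
  define v where "v x = (u x + u' x) / 2" for x
  define d where "d x = (u x - u' x) / 2" for x
  have "(\<lambda>x. v x + d x) = u" "(\<lambda>x. v x - d x) = u'" "(\<lambda>x. 2 * v x) = (\<lambda>x. u x + u' x)"
    by (simp_all add: v_def d_def fun_eq_iff field_simps)
  moreover have "polar (\<lambda>x. v x + d x) w + polar (\<lambda>x. v x - d x) w = 2 * polar v w"
    by (rule polar_add_diff)
  moreover have "polar (\<lambda>x. 2 * v x) w = 2 * polar v w"
    using polar_add_diff[of v v w] polar_zero by (simp flip: mult_2)
  ultimately show ?thesis
    by simp
qed

lemma polar_scale: "polar (\<lambda>x. t * u x) w = t * polar u w"
proof (rule additive_bounded_imp_linear[where h = "\<lambda>s. polar (\<lambda>x. s * u x) w", simplified])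
  show "polar (\<lambda>x. (s1 + s2) * u x) w = polar (\<lambda>x. s1 * u x) w + polar (\<lambda>x. s2 * u x) w" for s1 s2
    using polar_add[of "\<lambda>x. s1 * u x" "\<lambda>x. s2 * u x" w] by (simp add: distrib_right)
  show "\<bar>polar (\<lambda>x. s * u x) w\<bar> \<le> (N u + N w) / 2" if "\<bar>s\<bar> \<le> 1" for s
  proof -
    have "s\<^sup>2 * N u \<le> N u"
      using that nonneg[of u] by (simp add: abs_square_le_1 mult_left_le_one_le)
    then show ?thesis
      using parallelogram[of "\<lambda>x. s * u x" w] scale[of s u]
        nonneg[of "\<lambda>x. s * u x + w x"] nonneg[of "\<lambda>x. s * u x - w x"]
      unfolding polar_def by (simp add: abs_le_iff)
  qed
qed

lemma expand_combination:
  "N (\<lambda>x. s * u x + t * w x)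
     = s\<^sup>2 * N u + t\<^sup>2 * N w + s * t * (N (\<lambda>x. u x + w x) - N u - N w)"
proof -
  have sum: "N (\<lambda>x. u x + w x) = N u + N w + 2 * polar u w" for u w
    using parallelogram[of u w] unfolding polar_def by argo
  have "polar (\<lambda>x. s * u x) (\<lambda>x. t * w x) = s * t * polar u w"
    using polar_scale[of s u] polar_scale[of t w] polar_commute by simp
  then show ?thesis
    using sum[of "\<lambda>x. s * u x" "\<lambda>x. t * w x"] sum[of u w] scale[of s u] scale[of t w]
    by (simp add: algebra_simps)
qed

end

section \<open>Minimal energy of extensions from a boundary set\<close>

definition dirichlet_sum :: "('a \<times> 'a) set \<Rightarrow> ('a \<Rightarrow> real) \<Rightarrow> real" where
  "dirichlet_sum E v = (\<Sum>(x, y)\<in>E. (v x - v y)\<^sup>2)"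

definition trace_energy :: "('a \<times> 'a) set \<Rightarrow> 'a set \<Rightarrow> ('a \<Rightarrow> real) \<Rightarrow> real" where
  "trace_energy E B u = (INF v\<in>{v. \<forall>x\<in>B. v x = u x}. dirichlet_sum E v)"

lemma dirichlet_sum_nonneg: "0 \<le> dirichlet_sum E v"
  unfolding dirichlet_sum_def by (intro sum_nonneg) auto

lemma dirichlet_sum_parallelogram:
  "dirichlet_sum E (\<lambda>x. v x + w x) + dirichlet_sum E (\<lambda>x. v x - w x)
     = 2 * dirichlet_sum E v + 2 * dirichlet_sum E w"
  unfolding dirichlet_sum_def sum.distrib[symmetric] sum_distrib_left
  by (intro sum.cong) (auto simp: power2_eq_square algebra_simps)

lemma dirichlet_sum_scale: "dirichlet_sum E (\<lambda>x. t * v x) = t\<^sup>2 * dirichlet_sum E v"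
  unfolding dirichlet_sum_def sum_distrib_left
  by (intro sum.cong) (auto simp: power2_eq_square algebra_simps)

lemma dirichlet_sum_mono: "finite E \<Longrightarrow> E' \<subseteq> E \<Longrightarrow> dirichlet_sum E' v \<le> dirichlet_sum E v"
  unfolding dirichlet_sum_def by (rule sum_mono2) auto

lemma trace_energy_le: "(\<And>x. x \<in> B \<Longrightarrow> v x = u x) \<Longrightarrow> trace_energy E B u \<le> dirichlet_sum E v"
  unfolding trace_energy_def
  by (rule cINF_lower) (auto intro: bdd_belowI2[of _ 0] dirichlet_sum_nonneg)

lemma trace_energy_greatest:
  "(\<And>v. (\<And>x. x \<in> B \<Longrightarrow> v x = u x) \<Longrightarrow> c \<le> dirichlet_sum E v) \<Longrightarrow> c \<le> trace_energy E B u"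
  unfolding trace_energy_def by (rule cINF_greatest) auto

lemma trace_energy_nonneg: "0 \<le> trace_energy E B u"
  by (rule trace_energy_greatest) (rule dirichlet_sum_nonneg)

lemma trace_energy_parallelogram_le:
  "trace_energy E B (\<lambda>x. u x + w x) + trace_energy E B (\<lambda>x. u x - w x)
     \<le> 2 * trace_energy E B u + 2 * trace_energy E B w"
proof -
  let ?T = "trace_energy E B"
  let ?X = "?T (\<lambda>x. u x + w x) + ?T (\<lambda>x. u x - w x)"
  have bound: "(?X - 2 * dirichlet_sum E w') / 2 \<le> ?T u"
    if w': "\<And>x. x \<in> B \<Longrightarrow> w' x = w x" for w'
  proof (rule trace_energy_greatest)
    fix v assume v: "\<And>x. x \<in> B \<Longrightarrow> v x = u x"
    have "?T (\<lambda>x. u x + w x) \<le> dirichlet_sum E (\<lambda>x. v x + w' x)"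
      "?T (\<lambda>x. u x - w x) \<le> dirichlet_sum E (\<lambda>x. v x - w' x)"
      by (simp_all add: trace_energy_le v w')
    then show "(?X - 2 * dirichlet_sum E w') / 2 \<le> dirichlet_sum E v"
      using dirichlet_sum_parallelogram[of E v w'] by simp
  qed
  have "(?X - 2 * ?T u) / 2 \<le> ?T w"
  proof (rule trace_energy_greatest)
    fix w' assume "\<And>x. x \<in> B \<Longrightarrow> w' x = w x"
    from bound[OF this] show "(?X - 2 * ?T u) / 2 \<le> dirichlet_sum E w'"
      by simp
  qed
  then show ?thesis
    by simp
qed

lemma trace_energy_scale_le: "trace_energy E B (\<lambda>x. t * u x) \<le> t\<^sup>2 * trace_energy E B u"
proof (cases "t = 0")
  case True
  then show ?thesis
    using trace_energy_le[of B "\<lambda>x. 0" "\<lambda>x. t * u x" E] by (simp add: dirichlet_sum_def)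
next
  case False
  have "trace_energy E B (\<lambda>x. t * u x) / t\<^sup>2 \<le> trace_energy E B u"
  proof (rule trace_energy_greatest)
    fix v assume "\<And>x. x \<in> B \<Longrightarrow> v x = u x"
    then have "trace_energy E B (\<lambda>x. t * u x) \<le> dirichlet_sum E (\<lambda>x. t * v x)"
      by (intro trace_energy_le) simp
    with False show "trace_energy E B (\<lambda>x. t * u x) / t\<^sup>2 \<le> dirichlet_sum E v"
      by (simp add: dirichlet_sum_scale field_simps)
  qed
  with False show ?thesis
    by (simp add: field_simps)
qed

lemma trace_energy_scale: "trace_energy E B (\<lambda>x. t * u x) = t\<^sup>2 * trace_energy E B u"
proof (cases "t = 0")
  case True
  then show ?thesis
    using trace_energy_scale_le[of E B t u] trace_energy_nonneg[of E B "\<lambda>x. t * u x"] by simp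
next
  case False
  have "trace_energy E B u \<le> (1 / t)\<^sup>2 * trace_energy E B (\<lambda>x. t * u x)"
    using trace_energy_scale_le[of E B "1 / t" "\<lambda>x. t * u x"] False by simp
  with False have "t\<^sup>2 * trace_energy E B u \<le> trace_energy E B (\<lambda>x. t * u x)"
    by (simp add: field_simps)
  with trace_energy_scale_le[of E B t u] show ?thesis
    by simp
qed

lemma trace_energy_parallelogram:
  "trace_energy E B (\<lambda>x. u x + w x) + trace_energy E B (\<lambda>x. u x - w x)
     = 2 * trace_energy E B u + 2 * trace_energy E B w"
proof -
  have "(\<lambda>x. (u x + w x) + (u x - w x)) = (\<lambda>x. 2 * u x)"
    "(\<lambda>x. (u x + w x) - (u x - w x)) = (\<lambda>x. 2 * w x)"
    by auto
  then have "trace_energy E B (\<lambda>x. 2 * u x) + trace_energy E B (\<lambda>x. 2 * w x)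
     \<le> 2 * trace_energy E B (\<lambda>x. u x + w x) + 2 * trace_energy E B (\<lambda>x. u x - w x)"
    using trace_energy_parallelogram_le[of E B "\<lambda>x. u x + w x" "\<lambda>x. u x - w x"] by simp
  then show ?thesis
    using trace_energy_parallelogram_le[of E B u w] by (simp add: trace_energy_scale)
qed

interpretation trace_energy: quadratic_functional "trace_energy E B"
  by unfold_locales (auto simp: trace_energy_parallelogram trace_energy_scale trace_energy_nonneg)

lemma trace_energy_cong: "(\<And>x. x \<in> B \<Longrightarrow> u x = u' x) \<Longrightarrow> trace_energy E B u = trace_energy E B u'"
  unfolding trace_energy_def by (rule arg_cong[where f = Inf]) auto

lemma trace_energy_add_const: "trace_energy E B (\<lambda>x. u x + c) = trace_energy E B u"
proof -
  have le: "trace_energy E B (\<lambda>x. u x + c) \<le> trace_energy E B u" for u c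
  proof (rule trace_energy_greatest)
    fix v assume "\<And>x. x \<in> B \<Longrightarrow> v x = u x"
    then have "trace_energy E B (\<lambda>x. u x + c) \<le> dirichlet_sum E (\<lambda>x. v x + c)"
      by (intro trace_energy_le) simp
    then show "trace_energy E B (\<lambda>x. u x + c) \<le> dirichlet_sum E v"
      by (simp add: dirichlet_sum_def)
  qed
  show ?thesis
    using le[of u c] le[of "\<lambda>x. u x + c" "- c"] by simp
qed

lemma dirichlet_sum_compose:
  assumes "inj \<rho>" "map_prod \<rho> \<rho> ` E = E"
  shows "dirichlet_sum E (v \<circ> \<rho>) = dirichlet_sum E v"
proof -
  have "inj_on (map_prod \<rho> \<rho>) E"
    using prod.inj_map[OF assms(1) assms(1)] by (rule inj_on_subset) simp
  then have "dirichlet_sum (map_prod \<rho> \<rho> ` E) v = dirichlet_sum E (v \<circ> \<rho>)"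
    unfolding dirichlet_sum_def by (subst sum.reindex) (auto intro: sum.cong)
  with assms(2) show ?thesis
    by simp
qed

lemma trace_energy_compose:
  assumes "bij \<rho>" "\<rho> ` B = B" "map_prod \<rho> \<rho> ` E = E"
  shows "trace_energy E B (u \<circ> \<rho>) = trace_energy E B u"
proof -
  have "{w. \<forall>x\<in>B. w x = (u \<circ> \<rho>) x} = (\<lambda>v. v \<circ> \<rho>) ` {v. \<forall>x\<in>B. v x = u x}"
  proof (intro equalityI subsetI)
    fix w assume w: "w \<in> {w. \<forall>x\<in>B. w x = (u \<circ> \<rho>) x}"
    have "w \<circ> inv \<rho> \<in> {v. \<forall>x\<in>B. v x = u x}"
    proof (intro CollectI ballI)
      fix y assume "y \<in> B"
      then obtain x where "x \<in> B" "y = \<rho> x"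
        using assms(2) by blast
      then show "(w \<circ> inv \<rho>) y = u y"
        using w bij_is_inj[OF assms(1)] by simp
    qed
    moreover have "w = (w \<circ> inv \<rho>) \<circ> \<rho>"
      using bij_is_inj[OF assms(1)] by (simp add: fun_eq_iff)
    ultimately show "w \<in> (\<lambda>v. v \<circ> \<rho>) ` {v. \<forall>x\<in>B. v x = u x}"
      by blast
  qed (use assms(2) in fastforce)
  then show ?thesis
    unfolding trace_energy_def
    using dirichlet_sum_compose[OF bij_is_inj[OF assms(1)] assms(3)] by (simp add: image_image)
qed

section \<open>The level-one graph and its rotational symmetry\<close>

lemma q_distinct: "q0 \<noteq> q1" "q0 \<noteq> q2" "q1 \<noteq> q2" "q1 \<noteq> q0" "q2 \<noteq> q0" "q2 \<noteq> q1"
  by (auto simp: q0_def q1_def q2_def complex_eq_iff)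

lemma energy0_eq: "energy0 u = 2 * ((u q0 - u q1)\<^sup>2 + (u q0 - u q2)\<^sup>2 + (u q1 - u q2)\<^sup>2)"
proof -
  have edges0: "edges0 = {(q0, q1), (q0, q2), (q1, q0), (q1, q2), (q2, q0), (q2, q1)}"
    using q_distinct by (auto simp: edges0_def V0_def)
  show ?thesis
    unfolding energy0_def edges0 using q_distinct by (simp add: power2_commute)
qed

text \<open>\<open>q2 - 1 = exp (2\<pi>i/3)\<close>, so this is the rotation by \<open>2\<pi>/3\<close> about the centre of \<open>T\<close>.\<close>

definition rotation :: "complex \<Rightarrow> complex" where
  "rotation z = (q2 - 1) * z + 1"

lemma rotation_vertices: "rotation q0 = q1" "rotation q1 = q2" "rotation q2 = q0"
  by (auto simp: rotation_def q0_def q1_def q2_def complex_eq_iff algebra_simps)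

lemma rotation_rotation_rotation: "rotation (rotation (rotation z)) = z"
  by (auto simp: rotation_def q2_def complex_eq_iff algebra_simps power2_eq_square)

lemma bij_rotation: "bij rotation"
  by (rule o_bij[where g = "rotation \<circ> rotation"]) (simp_all add: fun_eq_iff rotation_rotation_rotation)

lemma rotation_V0: "rotation ` V0 = V0"
  by (auto simp: V0_def rotation_vertices image_iff intro: rotation_vertices[symmetric])

lemma rotation_Fmap:
  assumes "a + b < k"
  shows "rotation (Fmap k (a, b) x) = Fmap k (k - 1 - a - b, a) (rotation x)"
proof -
  have "real (k - Suc (a + b)) = real k - 1 - real a - real b"
    using assms by (simp add: of_nat_diff)
  with assms show ?thesis
    by (simp add: rotation_def Fmap_def q1_def q2_def complex_eq_iff field_simps)
qed

lemma rotation_cell: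
  assumes "(a, b) \<in> cells k"
  shows "(k - 1 - a - b, a) \<in> cells k" "rotation ` Fmap k (a, b) ` V0 = Fmap k (k - 1 - a - b, a) ` V0"
proof -
  from assms have "a + b < k"
    by (simp add: cells_def)
  then show "(k - 1 - a - b, a) \<in> cells k"
    by (simp add: cells_def)
  from \<open>a + b < k\<close> have "rotation ` Fmap k (a, b) ` V0 = Fmap k (k - 1 - a - b, a) ` rotation ` V0"
    by (simp add: image_image rotation_Fmap)
  then show "rotation ` Fmap k (a, b) ` V0 = Fmap k (k - 1 - a - b, a) ` V0"
    by (simp add: rotation_V0)
qed

lemma rotation_edge:
  assumes "(x, y) \<in> edges1 k"
  shows "(rotation x, rotation y) \<in> edges1 k"
proof -
  obtain a b where cell: "(a, b) \<in> cells k" "x \<in> Fmap k (a, b) ` V0" "y \<in> Fmap k (a, b) ` V0"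
    and "x \<noteq> y"
    using assms by (auto simp: edges1_def)
  then have "rotation x \<noteq> rotation y"
    using bij_is_inj[OF bij_rotation] by (auto dest: injD)
  with rotation_cell[OF cell(1)] cell(2,3) show ?thesis
    unfolding edges1_def V1_def by blast
qed

lemma rotation_edges1: "map_prod rotation rotation ` edges1 k = edges1 k"
proof (intro equalityI subsetI)
  fix e assume "e \<in> edges1 k"
  then have "map_prod rotation rotation (map_prod rotation rotation e) \<in> edges1 k"
    by (cases e) (simp add: rotation_edge)
  moreover have "e = map_prod rotation rotation (map_prod rotation rotation (map_prod rotation rotation e))"
    by (cases e) (simp add: rotation_rotation_rotation)
  ultimately show "e \<in> map_prod rotation rotation ` edges1 k"
    by blast
qed (auto simp: rotation_edge)

lemma trace_energy_indicator_rotate: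
  assumes "map_prod rotation rotation ` E = E"
  shows "trace_energy E V0 (indicator {q1}) = trace_energy E V0 (indicator {q0})"
    and "trace_energy E V0 (indicator {q2}) = trace_energy E V0 (indicator {q0})"
proof -
  have rotate: "trace_energy E V0 (u \<circ> rotation) = trace_energy E V0 u" for u
    using bij_rotation rotation_V0 assms by (rule trace_energy_compose)
  have "trace_energy E V0 (indicator {q1}) = trace_energy E V0 (indicator {q1} \<circ> rotation)"
    by (simp only: rotate)
  also have "\<dots> = trace_energy E V0 (indicator {q0})"
    by (rule trace_energy_cong) (auto simp: V0_def rotation_vertices q_distinct)
  finally show "trace_energy E V0 (indicator {q1}) = trace_energy E V0 (indicator {q0})" .
  have "trace_energy E V0 (indicator {q2}) = trace_energy E V0 (indicator {q0} \<circ> rotation)"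
    by (rule trace_energy_cong) (auto simp: V0_def rotation_vertices q_distinct)
  also have "\<dots> = trace_energy E V0 (indicator {q0})"
    by (rule rotate)
  finally show "trace_energy E V0 (indicator {q2}) = trace_energy E V0 (indicator {q0})" .
qed

lemma trace_energy_proportional_energy0:
  assumes "map_prod rotation rotation ` E = E"
  shows "trace_energy E V0 u = trace_energy E V0 (indicator {q0}) / 4 * energy0 u"
proof -
  let ?T = "trace_energy E V0"
  let ?a = "?T (indicator {q0})"
  define x where "x = u q0 - u q2"
  define y where "y = u q1 - u q2"
  have "?T u = ?T (\<lambda>z. (x * indicator {q0} z + y * indicator {q1} z) + u q2)"
    by (rule trace_energy_cong) (auto simp: V0_def x_def y_def q_distinct)
  also have "\<dots> = ?T (\<lambda>z. x * indicator {q0} z + y * indicator {q1} z)"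
    by (rule trace_energy_add_const)
  also have "\<dots> = x\<^sup>2 * ?a + y\<^sup>2 * ?T (indicator {q1})
      + x * y * (?T (\<lambda>z. indicator {q0} z + indicator {q1} z) - ?a - ?T (indicator {q1}))"
    by (rule trace_energy.expand_combination)
  also have "?T (\<lambda>z. indicator {q0} z + indicator {q1} z) = ?T (\<lambda>z. (- 1) * indicator {q2} z + 1)"
    by (rule trace_energy_cong) (auto simp: V0_def q_distinct)
  also have "\<dots> = ?a"
    using trace_energy_indicator_rotate[OF assms]
    by (simp only: trace_energy_add_const trace_energy_scale) simp
  finally have "?T u = ?a * (x\<^sup>2 + y\<^sup>2 - x * y)"
    using trace_energy_indicator_rotate[OF assms] by (simp add: algebra_simps)
  moreover have "energy0 u = 4 * (x\<^sup>2 + y\<^sup>2 - x * y)"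
    by (simp add: energy0_eq x_def y_def power2_eq_square algebra_simps)
  ultimately show ?thesis
    by simp
qed

section \<open>Energy along the two sides through \<open>q0\<close>\<close>

definition path_edges :: "nat \<Rightarrow> (nat \<Rightarrow> 'a) \<Rightarrow> ('a \<times> 'a) set" where
  "path_edges n p = (\<lambda>j. (p j, p (Suc j))) ` {..<n} \<union> (\<lambda>j. (p (Suc j), p j)) ` {..<n}"

lemma dirichlet_sum_path_edges:
  assumes "inj_on p {..n}"
  shows "2 * (v (p 0) - v (p n))\<^sup>2 / n \<le> dirichlet_sum (path_edges n p) v"
proof -
  let ?d = "\<lambda>j. v (p j) - v (p (Suc j))"
  have inj: "inj_on (\<lambda>j. (p j, p (Suc j))) {..<n}" "inj_on (\<lambda>j. (p (Suc j), p j)) {..<n}"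
    using assms by (auto simp: inj_on_def)
  have "(p j, p (Suc j)) \<noteq> (p (Suc i), p i)" if "i < n" "j < n" for i j
  proof
    assume "(p j, p (Suc j)) = (p (Suc i), p i)"
    then have "j = Suc i" "Suc j = i"
      using that by (auto intro: inj_onD[OF assms])
    then show False
      by simp
  qed
  then have "(\<lambda>j. (p j, p (Suc j))) ` {..<n} \<inter> (\<lambda>j. (p (Suc j), p j)) ` {..<n} = {}"
    by blast
  then have "dirichlet_sum (path_edges n p) v = 2 * (\<Sum>j<n. (?d j)\<^sup>2)"
    unfolding dirichlet_sum_def path_edges_def
    by (simp add: sum.union_disjoint sum.reindex inj power2_commute)
  moreover have "(v (p 0) - v (p n))\<^sup>2 \<le> (\<Sum>j<n. (?d j)\<^sup>2) * n"
    using sum_squared_le_sum_of_squares[of ?d "{..<n}"] sum_lessThan_telescope'[of "\<lambda>j. v (p j)" n]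
    by simp
  ultimately show ?thesis
    by (cases "n = 0") (simp_all add: field_simps)
qed

definition side :: "nat \<Rightarrow> complex \<Rightarrow> nat \<Rightarrow> complex" where
  "side k q j = of_nat j * q / of_nat k"

lemma side_Fmap:
  "0 < k \<Longrightarrow> side k q1 j = Fmap k (j, 0) q0" "0 < k \<Longrightarrow> side k q1 (Suc j) = Fmap k (j, 0) q1"
  "0 < k \<Longrightarrow> side k q2 j = Fmap k (0, j) q0" "0 < k \<Longrightarrow> side k q2 (Suc j) = Fmap k (0, j) q2"
  by (simp_all add: side_def Fmap_def q0_def q1_def add_divide_distrib distrib_right)

lemma inj_side: "0 < k \<Longrightarrow> q \<noteq> 0 \<Longrightarrow> inj (side k q)"
  by (auto simp: inj_def side_def)

lemma Fmap_edge:
  assumes "i \<in> cells k" "x \<in> V0" "y \<in> V0" "Fmap k i x \<noteq> Fmap k i y"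
  shows "(Fmap k i x, Fmap k i y) \<in> edges1 k"
  using assms by (auto simp: edges1_def V1_def)

lemma path_edges_side_subset:
  assumes "0 < k" "q \<in> {q1, q2}"
  shows "path_edges k (side k q) \<subseteq> edges1 k"
proof -
  have "(side k q j, side k q (Suc j)) \<in> edges1 k \<and> (side k q (Suc j), side k q j) \<in> edges1 k"
    if "j < k" for j
  proof -
    have "q \<noteq> 0"
      using assms(2) q_distinct by (auto simp: q0_def)
    with assms(1) have "side k q j \<noteq> side k q (Suc j)"
      by (simp add: side_def)
    moreover have "(j, 0) \<in> cells k" "(0, j) \<in> cells k"
      using that by (simp_all add: cells_def)
    moreover have "q0 \<in> V0" "q1 \<in> V0" "q2 \<in> V0"
      by (simp_all add: V0_def)
    ultimately show ?thesis
      using assms(2) Fmap_edge side_Fmap[OF assms(1)] by (metis insert_iff singletonD)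
  qed
  then show ?thesis
    unfolding path_edges_def by blast
qed

lemma path_edges_sides_disjoint:
  "path_edges k (side k q1) \<inter> path_edges k (side k q2) = {}"
proof -
  have "Im (fst e) = 0 \<and> Im (snd e) = 0" if "e \<in> path_edges k (side k q1)" for e
    using that by (auto simp: path_edges_def side_def q1_def)
  moreover have "0 < Im (fst e) \<or> 0 < Im (snd e)" if "e \<in> path_edges k (side k q2)" for e
    using that by (auto simp: path_edges_def side_def q2_def)
  ultimately show ?thesis
    by fastforce
qed

lemma finite_edges1: "finite (edges1 k)"
proof -
  have "finite (cells k)"
    by (rule finite_subset[of _ "{..<k} \<times> {..<k}"]) (auto simp: cells_def)
  then have "finite (V1 k)"
    by (simp add: V1_def V0_def)
  moreover have "edges1 k \<subseteq> V1 k \<times> V1 k"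
    by (auto simp: edges1_def)
  ultimately show ?thesis
    by (meson finite_SigmaI finite_subset)
qed

lemma dirichlet_sum_edges1_ge:
  assumes "0 < k"
  shows "2 * ((v q0 - v q1)\<^sup>2 + (v q0 - v q2)\<^sup>2) / real k \<le> dirichlet_sum (edges1 k) v"
proof -
  have side_path: "2 * (v q0 - v q)\<^sup>2 / real k \<le> dirichlet_sum (path_edges k (side k q)) v"
    if "q \<in> {q1, q2}" for q
  proof -
    have "q \<noteq> 0"
      using that q_distinct by (auto simp: q0_def)
    then have "inj_on (side k q) {..k}"
      using inj_side[OF assms] by (auto intro: inj_on_subset)
    moreover have "side k q 0 = q0" "side k q k = q"
      using assms by (simp_all add: side_def q0_def)
    ultimately show ?thesis
      using dirichlet_sum_path_edges[of "side k q" k v] by simp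
  qed
  have "finite (path_edges k (side k q))" for q
    by (simp add: path_edges_def)
  then have "dirichlet_sum (path_edges k (side k q1) \<union> path_edges k (side k q2)) v
      = dirichlet_sum (path_edges k (side k q1)) v + dirichlet_sum (path_edges k (side k q2)) v"
    unfolding dirichlet_sum_def using path_edges_sides_disjoint by (simp add: sum.union_disjoint)
  moreover have "dirichlet_sum (path_edges k (side k q1) \<union> path_edges k (side k q2)) v
      \<le> dirichlet_sum (edges1 k) v"
    using path_edges_side_subset[OF assms] by (intro dirichlet_sum_mono finite_edges1) auto
  ultimately show ?thesis
    using side_path[of q1] side_path[of q2] by (simp add: add_divide_distrib)
qed

lemma trace_energy_indicator_ge:
  assumes "0 < k"
  shows "4 / real k \<le> trace_energy (edges1 k) V0 (indicator {q0})"
proof (rule trace_energy_greatest)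
  fix v :: "complex \<Rightarrow> real" assume "\<And>x. x \<in> V0 \<Longrightarrow> v x = indicator {q0} x"
  then have "v q0 = 1" "v q1 = 0" "v q2 = 0"
    using q_distinct by (simp_all add: V0_def)
  then show "4 / real k \<le> dirichlet_sum (edges1 k) v"
    using dirichlet_sum_edges1_ge[OF assms, of v] by simp
qed

section \<open>The renormalisation constant\<close>

lemma min_ext_energy_eq:
  assumes "0 < r"
  shows "min_ext_energy k r u = trace_energy (edges1 k) V0 u / r"
proof -
  let ?D = "dirichlet_sum (edges1 k) ` {v. \<forall>x\<in>V0. v x = u x}"
  have "{energy1 k r v | v. \<forall>x\<in>V0. v x = u x} = (\<lambda>s. s / r) ` ?D"
    by (auto simp: energy1_def dirichlet_sum_def)
  moreover have "Inf ?D / r = (INF s\<in>?D. s / r)"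
  proof (rule continuous_at_Inf_mono)
    show "mono (\<lambda>s::real. s / r)"
      using assms by (simp add: mono_def divide_right_mono)
    show "continuous (at_right (Inf ?D)) (\<lambda>s::real. s / r)"
      by (intro continuous_intros) (use assms in simp)
    show "?D \<noteq> {}" "bdd_below ?D"
      by (auto intro: bdd_belowI2[of _ 0] dirichlet_sum_nonneg)
  qed
  ultimately show ?thesis
    by (simp add: min_ext_energy_def trace_energy_def)
qed

lemma renorm_const_eqI:
  assumes "0 < c" and proportional: "\<And>u. trace_energy (edges1 k) V0 u = c * energy0 u"
  shows "renorm_const k = c"
  unfolding renorm_const_def
proof (rule the_equality)
  show "0 < c \<and> (\<forall>u. min_ext_energy k c u = energy0 u)"
    using assms by (simp add: min_ext_energy_eq)
next
  fix r assume "0 < r \<and> (\<forall>u. min_ext_energy k r u = energy0 u)"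
  then have "0 < r" and "min_ext_energy k r (indicator {q0}) = energy0 (indicator {q0})"
    by simp_all
  moreover have "energy0 (indicator {q0}) = 4"
    using q_distinct by (simp add: energy0_eq)
  ultimately have "c * 4 / r = 4"
    by (simp add: min_ext_energy_eq proportional)
  with \<open>0 < r\<close> show "r = c"
    by (simp add: field_simps)
qed

theorem lemma2p2:
  fixes k :: nat
  assumes "k \<ge> 2"
  shows "renorm_const k > 2 / (3 * real k)"
proof -
  from assms have "0 < k"
    by simp
  define c where "c = trace_energy (edges1 k) V0 (indicator {q0}) / 4"
  have "1 / real k \<le> c"
    using trace_energy_indicator_ge[OF \<open>0 < k\<close>] by (simp add: c_def)
  moreover have "2 / (3 * real k) < 1 / real k"
    using \<open>0 < k\<close> by (simp add: field_simps)
  moreover have "renorm_const k = c"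
  proof (rule renorm_const_eqI)
    have "0 < 1 / real k"
      using \<open>0 < k\<close> by simp
    with \<open>1 / real k \<le> c\<close> show "0 < c"
      by linarith
    show "trace_energy (edges1 k) V0 u = c * energy0 u" for u
      using trace_energy_proportional_energy0[OF rotation_edges1] by (simp add: c_def)
  qed
  ultimately show ?thesis
    by linarith
qed

end
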